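(* Let $n\in\mathbb N$, $\Lambda_n=\{0,\frac{1}{n}\pi,\dots,\frac{n-1}{n}\pi\}$, let $\underline\mu:\Lambda_n\to\mathbb N_0$ be any multiplicity function, $A=A(\Lambda_n,\underline\mu)$, $m=\max\{\mu_\alpha:\alpha\in\Lambda_n\}$, $\underline\kappa$ the constant function with value $m$ on $\Lambda_n$, $C=A(\Lambda_n,\underline\kappa)$, and $\Omega:=\operatorname{Hom}_C(A,C)$. Put $\nu_\alpha=m-\mu_\alpha$ for $\alpha\in\Lambda_n$. Then $\Omega\cong\{f\in C:\ f^{(0)}_\alpha=f^{(2)}_\alpha=\dots=f^{(2(\nu_\alpha-1))}_\alpha=0\ \text{for all }\alpha\in\Lambda_n\}$.
   Context: $R=\mathbb C[z_1,z_2]$; for a finite $\Pi\subset\mathbb C$ with pairwise differences not in $\pi\mathbb Z$ and $\underline\mu:\Pi\to\mathbb N_0$, $A(\Pi,\underline\mu)=\{f\in R:l_\alpha^{2\mu_\alpha+1}\mid f-s_\alpha(f)\ \forall\alpha\in\Pi\}$, where $l_\alpha=-\sin(\alpha)z_1+\cos(\alpha)z_2$ and $s_\alpha$ is the involution of $R$ induced by the reflection of $\mathbb C^2$ fixing $\{l_\alpha=0\}$. Polar coordinates $z_1=\rho\cos\varphi$, $z_2=\rho\sin\varphi$; $f^{(k)}_\alpha=\partial^k f/\partial\varphi^k|_{\varphi=\alpha}\in\mathbb C[\rho]$. (The conditions for $\alpha$ with $\nu_\alpha=0$ are empty.) *)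

theory Defs
  imports "HOL-Analysis.Analysis"
begin

text \<open>Polynomials in two complex variables z1, z2 are represented by their
  (polynomial) functions complex => complex => complex; since the field is infinite
  this identifies R = C[z1,z2] with the ring of polynomial functions.\<close>

type_synonym bipoly = "complex \<Rightarrow> complex \<Rightarrow> complex"

definition R2 :: "bipoly set" where
  "R2 = {f. \<exists>N (c :: nat \<Rightarrow> nat \<Rightarrow> complex).
              \<forall>z1 z2. f z1 z2 = (\<Sum>i\<le>N. \<Sum>j\<le>N. c i j * z1 ^ i * z2 ^ j)}"

definition lform :: "complex \<Rightarrow> bipoly" where
  "lform \<alpha> = (\<lambda>z1 z2. - sin \<alpha> * z1 + cos \<alpha> * z2)"

text \<open>s_alpha f = f o (reflection of C^2 fixing the line l_alpha = 0, i.e. the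
  line spanned by (cos alpha, sin alpha)).\<close>
definition srefl :: "complex \<Rightarrow> bipoly \<Rightarrow> bipoly" where
  "srefl \<alpha> f = (\<lambda>z1 z2.
     f (2 * (cos \<alpha> * z1 + sin \<alpha> * z2) * cos \<alpha> - z1)
       (2 * (cos \<alpha> * z1 + sin \<alpha> * z2) * sin \<alpha> - z2))"

definition pdvd_pow :: "bipoly \<Rightarrow> nat \<Rightarrow> bipoly \<Rightarrow> bool" where
  "pdvd_pow l k g \<longleftrightarrow> (\<exists>h\<in>R2. \<forall>z1 z2. g z1 z2 = (l z1 z2) ^ k * h z1 z2)"

definition algA :: "complex set \<Rightarrow> (complex \<Rightarrow> nat) \<Rightarrow> bipoly set" where
  "algA P \<mu> = {f \<in> R2. \<forall>\<alpha>\<in>P.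
      pdvd_pow (lform \<alpha>) (2 * \<mu> \<alpha> + 1) (\<lambda>z1 z2. f z1 z2 - srefl \<alpha> f z1 z2)}"

definition Lambda :: "nat \<Rightarrow> complex set" where
  "Lambda n = {complex_of_real (real k * pi / real n) | k. k < n}"

text \<open>f^{(k)}_alpha evaluated at rho: the k-th derivative in phi of
  f(rho cos phi, rho sin phi) at phi = alpha.  As an element of C[rho] it is zero iff
  it vanishes for all rho.\<close>
definition phi_deriv :: "bipoly \<Rightarrow> nat \<Rightarrow> complex \<Rightarrow> complex \<Rightarrow> complex" where
  "phi_deriv f k \<alpha> \<rho> = (deriv ^^ k) (\<lambda>\<phi>. f (\<rho> * cos \<phi>) (\<rho> * sin \<phi>)) \<alpha>"

text \<open>Hom_C(A, C): C-linear maps A -> C, made canonical by being 0 outside A.\<close>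
definition HomC :: "bipoly set \<Rightarrow> bipoly set \<Rightarrow> (bipoly \<Rightarrow> bipoly) set" where
  "HomC C A = {\<phi>. (\<forall>a\<in>A. \<phi> a \<in> C)
       \<and> (\<forall>a\<in>A. \<forall>b\<in>A. \<phi> (\<lambda>z1 z2. a z1 z2 + b z1 z2) = (\<lambda>z1 z2. \<phi> a z1 z2 + \<phi> b z1 z2))
       \<and> (\<forall>c\<in>C. \<forall>a\<in>A. \<phi> (\<lambda>z1 z2. c z1 z2 * a z1 z2) = (\<lambda>z1 z2. c z1 z2 * \<phi> a z1 z2))
       \<and> (\<forall>a. a \<notin> A \<longrightarrow> \<phi> a = (\<lambda>z1 z2. 0))}"

end

theory Submission
  imports Defs "HOL-Complex_Analysis.Complex_Analysis" "HOL-Computational_Algebra.Polynomial"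
begin

text \<open>In coordinates \<open>(u, v)\<close> rotated so that \<open>v = l_\<alpha>\<close>, the reflection \<open>s_\<alpha>\<close> is
  \<open>v \<mapsto> -v\<close>, so \<open>f \<in> A(\<Pi>, \<mu>)\<close> says that at each \<open>\<alpha>\<close> the expansion of \<open>f\<close> in powers of \<open>v\<close>
  has no odd terms below degree \<open>2 \<mu>_\<alpha>\<close>. A high power \<open>\<delta>\<close> of \<open>\<Prod> l_\<alpha>\<close> maps \<open>A\<close> into \<open>C\<close>,
  so for \<open>C\<close>-linear \<open>\<phi> : A \<rightarrow> C\<close> we get \<open>\<delta> \<phi>(a) = \<phi>(\<delta> a) = \<delta> a \<phi>(1)\<close>; cancelling \<open>\<delta>\<close> in
  the domain \<open>R\<close> identifies \<open>\<Omega>\<close> with the conductor \<open>{g \<in> C. A g \<subseteq> C}\<close> via \<open>\<phi> \<mapsto> \<phi>(1)\<close>.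
  By a parity count, \<open>g \<in> C\<close> lies in the conductor iff its \<open>v\<close>-expansion at every \<open>\<alpha>\<close>
  vanishes below degree \<open>2 \<nu>_\<alpha>\<close>; for necessity multiply \<open>g\<close> by
  \<open>l_\<alpha>^(2 \<mu>_\<alpha> + 1) \<Prod>_(\<beta> \<noteq> \<alpha>) l_\<beta>^(2 \<mu>_\<beta>)\<close>, whose lowest term at \<open>\<alpha>\<close> does not vanish because
  the angles differ modulo \<open>\<pi>\<close>. Finally, in polar coordinates \<open>v = \<rho> sin(\<phi> - \<alpha>)\<close> has a
  simple zero at \<open>\<phi> = \<alpha>\<close>, so vanishing below degree \<open>2 \<nu>_\<alpha>\<close> in \<open>v\<close> is the vanishing of the
  derivatives \<open>f^(2j)_\<alpha>\<close> for \<open>j < \<nu>_\<alpha>\<close> (the odd ones vanish anyway for \<open>f \<in> C\<close>).\<close>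

section \<open>Polynomial functions of two variables\<close>

text \<open>The outer variable of \<open>P\<close> is \<open>y\<close>: \<open>coeff P k\<close> is the coefficient of
  \<open>y ^ k\<close>, a polynomial in \<open>x\<close>.\<close>
definition poly2 :: "'a::comm_semiring_0 poly poly \<Rightarrow> 'a \<Rightarrow> 'a \<Rightarrow> 'a" where
  "poly2 P x y = poly (poly P [:y:]) x"

lemma poly2_0 [simp]: "poly2 0 x y = 0"
  by (simp add: poly2_def)

lemma poly2_add [simp]: "poly2 (P + Q) x y = poly2 P x y + poly2 Q x y"
  by (simp add: poly2_def)

lemma poly2_diff [simp]: "poly2 (P - Q) x y = poly2 P x y - poly2 Q x y"
  for P Q :: "'a::comm_ring poly poly"
  by (simp add: poly2_def)

lemma poly2_mult [simp]: "poly2 (P * Q) x y = poly2 P x y * poly2 Q x y"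
  for P Q :: "'a::comm_ring poly poly"
  by (simp add: poly2_def)

lemma poly2_pCons: "poly2 (pCons p P) x y = poly p x + y * poly2 P x y"
  by (simp add: poly2_def)

lemma poly2_const [simp]: "poly2 [:p:] x y = poly p x"
  by (simp add: poly2_def)

lemma poly2_monom_1 [simp]: "poly2 (monom 1 k) x y = y ^ k"
  for y :: "'a::comm_ring_1"
proof -
  have "poly (monom 1 k) [:y:] = [:y ^ k:]"
    by (induct k) (auto simp: poly_monom)
  then show ?thesis by (simp add: poly2_def)
qed

lemma poly2_at_0: "poly2 P x 0 = poly (coeff P 0) x"
  by (simp add: poly2_def poly_0_coeff_0)

lemma coeff_poly_at_const: "coeff (poly P [:y:]) i = poly (map_poly (\<lambda>p. coeff p i) P) y"
  by (induct P) (auto simp: map_poly_pCons)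

lemma poly2_eqI:
  fixes P Q :: "'a::{idom,ring_char_0} poly poly"
  assumes "\<And>x y. poly2 P x y = poly2 Q x y"
  shows "P = Q"
proof -
  have "poly (poly (P - Q) [:y:]) x = 0" for x y
    using assms by (simp add: poly2_def)
  then have "poly (P - Q) [:y:] = 0" for y
    using poly_all_0_iff_0 by blast
  then have "poly (map_poly (\<lambda>p. coeff p i) (P - Q)) = poly 0" for i
    by (metis coeff_0 coeff_poly_at_const poly_0 ext)
  then have "coeff (coeff (P - Q) k) i = 0" for k i
    by (metis coeff_0 coeff_map_poly poly_eq_poly_eq_iff)
  then show ?thesis
    by (metis poly_eq_iff coeff_0 eq_iff_diff_eq_0)
qed

lemma poly_eq_sum_atMost:
  fixes x :: "'a::{comm_semiring_0,semiring_1}"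
  assumes "degree p \<le> N"
  shows "poly p x = (\<Sum>i\<le>N. coeff p i * x ^ i)"
proof -
  have "(\<Sum>i\<le>degree p. coeff p i * x ^ i) = (\<Sum>i\<le>N. coeff p i * x ^ i)"
    by (rule sum.mono_neutral_left) (use assms in \<open>auto simp: coeff_eq_0\<close>)
  then show ?thesis by (simp add: poly_altdef)
qed

lemma R2_eq_range_poly2: "R2 = range poly2"
proof (intro set_eqI iffI)
  fix f :: bipoly assume "f \<in> R2"
  then obtain N c where f: "\<And>x y. f x y = (\<Sum>i\<le>N. \<Sum>j\<le>N. c i j * x ^ i * y ^ j)"
    unfolding R2_def by blast
  have "f = poly2 (\<Sum>i\<le>N. \<Sum>j\<le>N. monom (monom (c i j) i) j)"
    by (simp add: fun_eq_iff poly2_def f poly_sum poly_monom mult.assoc)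
  then show "f \<in> range poly2" by simp
next
  fix f :: bipoly assume "f \<in> range poly2"
  then obtain P where fP: "f = poly2 P" by auto
  define N where "N = max (degree P) (Max ((\<lambda>k. degree (coeff P k)) ` {..degree P}))"
  have deg_P: "degree P \<le> N"
    by (simp add: N_def)
  have deg_coeff: "degree (coeff P k) \<le> N" for k
    by (cases "k \<le> degree P") (auto simp: N_def coeff_eq_0 intro!: max.coboundedI2 Max_ge)
  have "f x y = (\<Sum>i\<le>N. \<Sum>j\<le>N. coeff (coeff P j) i * x ^ i * y ^ j)" for x y
  proof -
    have "f x y = (\<Sum>j\<le>N. poly (coeff P j) x * y ^ j)"
      unfolding fP poly2_def by (subst poly_eq_sum_atMost[OF deg_P]) (simp add: poly_sum poly_power)
    also have "\<dots> = (\<Sum>j\<le>N. \<Sum>i\<le>N. coeff (coeff P j) i * x ^ i * y ^ j)"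
      by (simp add: poly_eq_sum_atMost[OF deg_coeff] sum_distrib_right)
    also have "\<dots> = (\<Sum>i\<le>N. \<Sum>j\<le>N. coeff (coeff P j) i * x ^ i * y ^ j)"
      by (rule sum.swap)
    finally show ?thesis .
  qed
  then show "f \<in> R2"
    unfolding R2_def by (intro CollectI exI allI)
qed

lemma poly2_in_R2 [simp]: "poly2 P \<in> R2"
  by (simp add: R2_eq_range_poly2)

lemma R2_add:
  assumes "f \<in> R2" "g \<in> R2"
  shows "(\<lambda>x y. f x y + g x y) \<in> R2"
proof -
  obtain P Q where "f = poly2 P" "g = poly2 Q"
    using assms unfolding R2_eq_range_poly2 by auto
  then have "(\<lambda>x y. f x y + g x y) = poly2 (P + Q)"
    by (simp add: fun_eq_iff)
  then show ?thesis by simp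
qed

lemma R2_diff:
  assumes "f \<in> R2" "g \<in> R2"
  shows "(\<lambda>x y. f x y - g x y) \<in> R2"
proof -
  obtain P Q where "f = poly2 P" "g = poly2 Q"
    using assms unfolding R2_eq_range_poly2 by auto
  then have "(\<lambda>x y. f x y - g x y) = poly2 (P - Q)"
    by (simp add: fun_eq_iff)
  then show ?thesis by simp
qed

lemma R2_mult:
  assumes "f \<in> R2" "g \<in> R2"
  shows "(\<lambda>x y. f x y * g x y) \<in> R2"
proof -
  obtain P Q where "f = poly2 P" "g = poly2 Q"
    using assms unfolding R2_eq_range_poly2 by auto
  then have "(\<lambda>x y. f x y * g x y) = poly2 (P * Q)"
    by (simp add: fun_eq_iff)
  then show ?thesis by simp
qed

lemma R2_const: "(\<lambda>x y. c) \<in> R2"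
  unfolding R2_eq_range_poly2 by (intro range_eqI[where x = "[:[:c:]:]"]) (simp add: fun_eq_iff)

lemma R2_linear: "(\<lambda>x y. p * x + q * y) \<in> R2"
  unfolding R2_eq_range_poly2
  by (intro range_eqI[where x = "[:[:0, p:], [:q:]:]"]) (simp add: fun_eq_iff poly2_pCons algebra_simps)

lemma R2_induct [consumes 1, case_names const x y add mult]:
  assumes "f \<in> R2"
    and const: "\<And>c. K (\<lambda>x y. c)" and x: "K (\<lambda>x y. x)" and y: "K (\<lambda>x y. y)"
    and add: "\<And>f g. K f \<Longrightarrow> K g \<Longrightarrow> K (\<lambda>x y. f x y + g x y)"
    and mult: "\<And>f g. K f \<Longrightarrow> K g \<Longrightarrow> K (\<lambda>x y. f x y * g x y)"
  shows "K f"
proof -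
  have K_poly: "K (\<lambda>x y. poly p x)" for p
  proof (induct p)
    case 0 show ?case using const[of 0] by simp
  next
    case (pCons c p)
    then show ?case using add[OF const mult[OF x pCons(2)]] by simp
  qed
  have "K (poly2 P)" for P
  proof (induct P)
    case 0 show ?case using const[of 0] by (simp add: poly2_def)
  next
    case (pCons p P)
    then show ?case using add[OF K_poly mult[OF y pCons(2)]] by (simp add: poly2_pCons[abs_def])
  qed
  then show ?thesis using assms(1) by (auto simp: R2_eq_range_poly2)
qed

lemma R2_comp:
  assumes "f \<in> R2" "a \<in> R2" "b \<in> R2"
  shows "(\<lambda>x y. f (a x y) (b x y)) \<in> R2"
  using assms(1)
proof (induct rule: R2_induct)
  case (add f g)
  then show ?case by (rule R2_add)
next
  case (mult f g)
  then show ?case by (rule R2_mult)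
qed (use assms(2,3) R2_const in auto)

lemma R2_zero_divisor:
  assumes "p \<in> R2" "q \<in> R2" "\<And>x y. p x y * q x y = 0" "p x0 y0 \<noteq> 0"
  shows "q = (\<lambda>x y. 0)"
proof -
  obtain P Q where P: "p = poly2 P" and Q: "q = poly2 Q"
    using assms(1,2) unfolding R2_eq_range_poly2 by blast
  have "P * Q = 0"
    by (rule poly2_eqI) (use assms(3) in \<open>simp add: P Q\<close>)
  moreover have "P \<noteq> 0"
    using assms(4) P by auto
  ultimately show ?thesis by (simp add: Q fun_eq_iff)
qed

section \<open>Coordinates adapted to a line\<close>

lemma rotation_inverse_fst: "cos a * (cos a * x + sin a * y) - sin a * (- sin a * x + cos a * y) = (x::complex)"
  using sin_cos_squared_add3[of a] by algebra

lemma rotation_inverse_snd: "sin a * (cos a * x + sin a * y) + cos a * (- sin a * x + cos a * y) = (y::complex)"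
  using sin_cos_squared_add3[of a] by algebra

lemma rot_poly_exists:
  assumes "f \<in> R2"
  shows "\<exists>Q. \<forall>u v. f (cos a * u - sin a * v) (sin a * u + cos a * v) = poly2 Q u v"
  using assms
proof (induct rule: R2_induct)
  case (const c)
  show ?case by (auto intro!: exI[of _ "[:[:c:]:]"])
next
  case x
  show ?case by (auto intro!: exI[of _ "[:[:0, cos a:], [:- sin a:]:]"] simp: poly2_pCons)
next
  case y
  show ?case by (auto intro!: exI[of _ "[:[:0, sin a:], [:cos a:]:]"] simp: poly2_pCons algebra_simps)
next
  case (add f g)
  then show ?case by (metis poly2_add)
next
  case (mult f g)
  then show ?case by (metis poly2_mult)
qed

text \<open>\<open>rot_poly a f\<close> is \<open>f\<close> in the coordinates \<open>(u, v)\<close> of the frame rotated by \<open>a\<close>, in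
  which \<open>v\<close> is the linear form \<open>l_a\<close> and the reflection \<open>s_a\<close> is \<open>v \<mapsto> -v\<close>.\<close>
definition rot_poly :: "complex \<Rightarrow> bipoly \<Rightarrow> complex poly poly" where
  "rot_poly a f = (SOME Q. \<forall>u v. f (cos a * u - sin a * v) (sin a * u + cos a * v) = poly2 Q u v)"

lemma poly2_rot_poly:
  assumes "f \<in> R2"
  shows "poly2 (rot_poly a f) u v = f (cos a * u - sin a * v) (sin a * u + cos a * v)"
  using someI_ex[OF rot_poly_exists[OF assms, of a]] unfolding rot_poly_def by metis

lemma rot_poly_eqI:
  assumes "\<And>u v. f (cos a * u - sin a * v) (sin a * u + cos a * v) = poly2 Q u v"
  shows "rot_poly a f = Q"
proof -
  have "\<forall>u v. f (cos a * u - sin a * v) (sin a * u + cos a * v) = poly2 (rot_poly a f) u v"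
    unfolding rot_poly_def by (rule someI[of _ Q]) (use assms in blast)
  then show ?thesis
    using assms by (intro poly2_eqI) metis
qed

lemma eq_poly2_rot_poly:
  assumes "f \<in> R2"
  shows "f x y = poly2 (rot_poly a f) (cos a * x + sin a * y) (- sin a * x + cos a * y)"
  unfolding poly2_rot_poly[OF assms] rotation_inverse_fst rotation_inverse_snd ..

lemma rot_poly_add:
  "f \<in> R2 \<Longrightarrow> g \<in> R2 \<Longrightarrow> rot_poly a (\<lambda>x y. f x y + g x y) = rot_poly a f + rot_poly a g"
  by (rule rot_poly_eqI) (simp add: poly2_rot_poly)

lemma rot_poly_diff:
  "f \<in> R2 \<Longrightarrow> g \<in> R2 \<Longrightarrow> rot_poly a (\<lambda>x y. f x y - g x y) = rot_poly a f - rot_poly a g"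
  by (rule rot_poly_eqI) (simp add: poly2_rot_poly)

lemma rot_poly_mult:
  "f \<in> R2 \<Longrightarrow> g \<in> R2 \<Longrightarrow> rot_poly a (\<lambda>x y. f x y * g x y) = rot_poly a f * rot_poly a g"
  by (rule rot_poly_eqI) (simp add: poly2_rot_poly)

lemma rot_poly_const: "rot_poly a (\<lambda>x y. c) = [:[:c:]:]"
  by (rule rot_poly_eqI) simp

lemma lform_rotated: "lform a (cos a * u - sin a * v) (sin a * u + cos a * v) = v"
  unfolding lform_def using sin_cos_squared_add3[of a] by algebra

lemma lform_in_R2: "lform a \<in> R2"
  unfolding lform_def by (rule R2_linear)

lemma rot_poly_lform_power_mult:
  "h \<in> R2 \<Longrightarrow> rot_poly a (\<lambda>x y. lform a x y ^ k * h x y) = monom 1 k * rot_poly a h"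
  by (rule rot_poly_eqI) (simp add: poly2_rot_poly lform_rotated)

lemma srefl_rotated:
  "srefl a f (cos a * u - sin a * v) (sin a * u + cos a * v)
     = f (cos a * u - sin a * (- v)) (sin a * u + cos a * (- v))"
proof -
  have "cos a * (cos a * u - sin a * v) + sin a * (sin a * u + cos a * v) = u"
    using sin_cos_squared_add3[of a] by algebra
  then show ?thesis
    unfolding srefl_def by (simp add: algebra_simps)
qed

lemma srefl_in_R2:
  assumes "f \<in> R2"
  shows "srefl a f \<in> R2"
proof -
  have "srefl a f = (\<lambda>x y. f ((2 * cos a * cos a - 1) * x + (2 * cos a * sin a) * y)
                           ((2 * cos a * sin a) * x + (2 * sin a * sin a - 1) * y))"
    unfolding srefl_def by (simp add: fun_eq_iff algebra_simps)
  then show ?thesis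
    using R2_comp[OF assms R2_linear R2_linear] by simp
qed

lemma rot_poly_srefl:
  assumes "f \<in> R2"
  shows "rot_poly a (srefl a f) = rot_poly a f \<circ>\<^sub>p [:0, -1:]"
proof (rule rot_poly_eqI)
  fix u v
  show "srefl a f (cos a * u - sin a * v) (sin a * u + cos a * v) = poly2 (rot_poly a f \<circ>\<^sub>p [:0, -1:]) u v"
    unfolding srefl_rotated poly2_rot_poly[OF assms, symmetric] by (simp add: poly2_def poly_pcompose)
qed

lemma pdvd_pow_lform_iff:
  assumes "g \<in> R2"
  shows "pdvd_pow (lform a) k g \<longleftrightarrow> (\<forall>i<k. coeff (rot_poly a g) i = 0)"
proof
  assume "pdvd_pow (lform a) k g"
  then obtain h where h: "h \<in> R2" "g = (\<lambda>x y. lform a x y ^ k * h x y)"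
    unfolding pdvd_pow_def by blast
  then show "\<forall>i<k. coeff (rot_poly a g) i = 0"
    by (simp add: rot_poly_lform_power_mult coeff_monom_mult)
next
  assume "\<forall>i<k. coeff (rot_poly a g) i = 0"
  then obtain H where H: "rot_poly a g = monom 1 k * H"
    by (auto simp: dvd_def simp flip: monom_1_dvd_iff')
  define h where "h = (\<lambda>x y. poly2 H (cos a * x + sin a * y) (- sin a * x + cos a * y))"
  have "h \<in> R2"
    unfolding h_def by (rule R2_comp[OF poly2_in_R2 R2_linear R2_linear])
  moreover have "g x y = lform a x y ^ k * h x y" for x y
    by (subst eq_poly2_rot_poly[OF assms, of _ _ a]) (simp add: H h_def lform_def)
  ultimately show "pdvd_pow (lform a) k g"
    unfolding pdvd_pow_def by blast
qed

definition even_below :: "nat \<Rightarrow> 'a::zero poly \<Rightarrow> bool" where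
  "even_below k Q \<longleftrightarrow> (\<forall>i<k. odd i \<longrightarrow> coeff Q i = 0)"

lemma pdvd_pow_reflection_iff:
  assumes "f \<in> R2"
  shows "pdvd_pow (lform a) (2 * k + 1) (\<lambda>x y. f x y - srefl a f x y)
     \<longleftrightarrow> even_below (2 * k) (rot_poly a f)"
proof -
  have sf: "srefl a f \<in> R2"
    by (rule srefl_in_R2[OF assms])
  have "coeff (rot_poly a (\<lambda>x y. f x y - srefl a f x y)) i
          = (if even i then 0 else 2 * coeff (rot_poly a f) i)" for i
    by (simp add: rot_poly_diff[OF assms sf] rot_poly_srefl[OF assms] coeff_pcompose_linear)
  then show ?thesis
    unfolding pdvd_pow_lform_iff[OF R2_diff[OF assms sf]] even_below_def
    by (auto simp: less_Suc_eq)
qed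

lemma algA_eq: "algA P \<mu> = {f \<in> R2. \<forall>a\<in>P. even_below (2 * \<mu> a) (rot_poly a f)}"
  unfolding algA_def using pdvd_pow_reflection_iff by auto

section \<open>The algebras \<open>A(\<Pi>, \<mu>)\<close>\<close>

lemma even_below_add: "even_below k P \<Longrightarrow> even_below k Q \<Longrightarrow> even_below k (P + Q)"
  by (simp add: even_below_def)

lemma even_below_mult:
  fixes P Q :: "'a::comm_semiring_0 poly"
  assumes "even_below k P" "even_below k Q"
  shows "even_below k (P * Q)"
  unfolding even_below_def coeff_mult
proof (intro allI impI sum.neutral ballI)
  fix j i assume j: "j < k" "odd j" and i: "i \<in> {..j}"
  show "coeff P i * coeff Q (j - i) = 0"
  proof (cases "odd i")
    case True then show ?thesis using assms(1) i j by (auto simp: even_below_def)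
  next
    case False
    then have "odd (j - i)" using i j by auto
    then show ?thesis using assms(2) i j by (auto simp: even_below_def)
  qed
qed

lemma even_below_mono: "even_below k Q \<Longrightarrow> j \<le> k \<Longrightarrow> even_below j Q"
  by (simp add: even_below_def)

lemma even_below_mult_vanishing:
  fixes P Q :: "'a::comm_semiring_0 poly"
  assumes "even_below (2 * \<mu>) P" "even_below (2 * (\<mu> + \<nu>)) Q" "\<forall>i<2 * \<nu>. coeff Q i = 0"
  shows "even_below (2 * (\<mu> + \<nu>)) (P * Q)"
  unfolding even_below_def coeff_mult
proof (intro allI impI sum.neutral ballI)
  fix j i assume j: "j < 2 * (\<mu> + \<nu>)" "odd j" and i: "i \<in> {..j}"
  show "coeff P i * coeff Q (j - i) = 0"
  proof (cases "j - i < 2 * \<nu> \<or> odd (j - i)")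
    case True then show ?thesis using assms(2,3) j by (auto simp: even_below_def)
  next
    case False
    then have "odd i" "i < 2 * \<mu>" using i j by auto
    then show ?thesis using assms(1) by (simp add: even_below_def)
  qed
qed

lemma coeff_mult_lowest:
  fixes P Q :: "'a::comm_semiring_1 poly"
  assumes "\<forall>i<k. coeff P i = 0" "\<forall>i<l. coeff Q i = 0"
  shows "coeff (P * Q) (k + l) = coeff P k * coeff Q l"
proof -
  obtain P' Q' where P: "P = monom 1 k * P'" and Q: "Q = monom 1 l * Q'"
    using assms by (auto simp: dvd_def simp flip: monom_1_dvd_iff')
  have "P * Q = monom 1 (k + l) * (P' * Q')"
    by (simp add: P Q mult_monom ac_simps)
  then show ?thesis
    by (simp add: P Q coeff_monom_mult coeff_mult_0)
qed

lemma algA_subset_R2: "algA P \<mu> \<subseteq> R2"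
  by (simp add: algA_eq)

lemma algA_add: "f \<in> algA P \<mu> \<Longrightarrow> g \<in> algA P \<mu> \<Longrightarrow> (\<lambda>x y. f x y + g x y) \<in> algA P \<mu>"
  by (simp add: algA_eq R2_add rot_poly_add even_below_add)

lemma algA_mult: "f \<in> algA P \<mu> \<Longrightarrow> g \<in> algA P \<mu> \<Longrightarrow> (\<lambda>x y. f x y * g x y) \<in> algA P \<mu>"
  by (simp add: algA_eq R2_mult rot_poly_mult even_below_mult)

lemma algA_const: "(\<lambda>x y. c) \<in> algA P \<mu>"
  by (auto simp: algA_eq R2_const rot_poly_const even_below_def coeff_pCons split: nat.split)

lemma algA_antimono: "(\<And>a. a \<in> P \<Longrightarrow> \<mu> a \<le> \<kappa> a) \<Longrightarrow> algA P \<kappa> \<subseteq> algA P \<mu>"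
  by (auto simp: algA_eq intro: even_below_mono)

lemma in_algA_if_vanishing:
  assumes "f \<in> R2" "\<And>a i. a \<in> P \<Longrightarrow> i < 2 * \<mu> a \<Longrightarrow> coeff (rot_poly a f) i = 0"
  shows "f \<in> algA P \<mu>"
  using assms by (simp add: algA_eq even_below_def)

lemma R2_power: "f \<in> R2 \<Longrightarrow> (\<lambda>x y. f x y ^ k) \<in> R2"
  by (induct k) (simp_all add: R2_const R2_mult)

definition lform_prod :: "complex set \<Rightarrow> (complex \<Rightarrow> nat) \<Rightarrow> bipoly" where
  "lform_prod P e = (\<lambda>x y. \<Prod>c\<in>P. lform c x y ^ e c)"

lemma lform_prod_in_R2: "finite P \<Longrightarrow> lform_prod P e \<in> R2"
proof (induct P rule: finite_induct)
  case empty
  then show ?case by (simp add: lform_prod_def R2_const)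
next
  case (insert c P)
  have "(\<lambda>x y. lform c x y ^ e c * lform_prod P e x y) \<in> R2"
    by (intro R2_mult R2_power lform_in_R2 insert)
  then show ?case using insert by (simp add: lform_prod_def)
qed

lemma lform_prod_remove:
  "finite P \<Longrightarrow> b \<in> P \<Longrightarrow> lform_prod P e x y = lform b x y ^ e b * lform_prod (P - {b}) e x y"
  by (simp add: lform_prod_def prod.remove)

lemma rot_poly_lform_prod_mult_vanishing:
  assumes "finite P" "b \<in> P" "h \<in> R2" "i < e b"
  shows "coeff (rot_poly b (\<lambda>x y. lform_prod P e x y * h x y)) i = 0"
proof -
  have "(\<lambda>x y. lform_prod P e x y * h x y) = (\<lambda>x y. lform b x y ^ e b * (lform_prod (P - {b}) e x y * h x y))"
    using assms(1,2) by (simp add: lform_prod_remove mult.assoc)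
  moreover have "(\<lambda>x y. lform_prod (P - {b}) e x y * h x y) \<in> R2"
    using assms by (intro R2_mult lform_prod_in_R2) auto
  ultimately show ?thesis
    using assms(4) by (simp add: rot_poly_lform_power_mult coeff_monom_mult)
qed

lemma lform_prod_mult_in_algA:
  assumes "finite P" "h \<in> R2" "\<And>a. a \<in> P \<Longrightarrow> 2 * \<mu> a \<le> e a"
  shows "(\<lambda>x y. lform_prod P e x y * h x y) \<in> algA P \<mu>"
  using assms
  by (intro in_algA_if_vanishing R2_mult lform_prod_in_R2 rot_poly_lform_prod_mult_vanishing)
    (auto intro: order.strict_trans2)

lemma lform_prod_nonzero: "finite P \<Longrightarrow> lform_prod P e 1 \<i> \<noteq> 0"
proof -
  have "lform c 1 \<i> = \<i> * exp (\<i> * c)" for c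
    by (simp add: lform_def exp_Euler algebra_simps)
  then show "finite P \<Longrightarrow> ?thesis"
    by (simp add: lform_prod_def)
qed

lemma coeff_rot_poly_lform_prod:
  assumes "finite P" "b \<in> P" "\<forall>c\<in>P. c \<noteq> b \<longrightarrow> sin (b - c) \<noteq> 0"
  shows "coeff (rot_poly b (lform_prod P e)) (e b) \<noteq> 0"
proof -
  have rest: "lform_prod (P - {b}) e \<in> R2"
    using assms(1) by (simp add: lform_prod_in_R2)
  have "lform_prod P e = (\<lambda>x y. lform b x y ^ e b * lform_prod (P - {b}) e x y)"
    using assms(1,2) by (simp add: lform_prod_remove fun_eq_iff)
  then have "rot_poly b (lform_prod P e) = monom 1 (e b) * rot_poly b (lform_prod (P - {b}) e)"
    using rot_poly_lform_power_mult[OF rest] by simp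
  then have "poly (coeff (rot_poly b (lform_prod P e)) (e b)) 1 = lform_prod (P - {b}) e (cos b) (sin b)"
    by (simp add: coeff_monom_mult poly2_at_0[symmetric] poly2_rot_poly[OF rest])
  also have "\<dots> = (\<Prod>c\<in>P - {b}. sin (b - c) ^ e c)"
    by (simp add: lform_prod_def lform_def sin_diff algebra_simps)
  also have "\<dots> \<noteq> 0"
    using assms by simp
  finally show ?thesis by auto
qed

section \<open>Derivatives in the angular direction\<close>

lemma higher_deriv_mult_below_order:
  fixes f g :: "complex \<Rightarrow> complex"
  assumes "f holomorphic_on S" "g holomorphic_on S" "open S" "z \<in> S"
    and "\<And>i. i < p \<Longrightarrow> (deriv ^^ i) f z = 0" "\<And>j. j < q \<Longrightarrow> (deriv ^^ j) g z = 0"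
    and "n < p + q"
  shows "(deriv ^^ n) (\<lambda>w. f w * g w) z = 0"
proof -
  have "(deriv ^^ n) (\<lambda>w. f w * g w) z =
          (\<Sum>i = 0..n. of_nat (n choose i) * (deriv ^^ i) f z * (deriv ^^ (n - i)) g z)"
    by (rule higher_deriv_mult[OF assms(1-4)])
  also have "\<dots> = 0"
  proof (intro sum.neutral ballI)
    fix i assume "i \<in> {0..n}"
    then have "i < p \<or> n - i < q" using assms(7) by auto
    then show "of_nat (n choose i) * (deriv ^^ i) f z * (deriv ^^ (n - i)) g z = 0"
      using assms(5,6) by auto
  qed
  finally show ?thesis .
qed

lemma higher_deriv_mult_at_order:
  fixes f g :: "complex \<Rightarrow> complex"
  assumes "f holomorphic_on S" "g holomorphic_on S" "open S" "z \<in> S"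
    and "\<And>i. i < p \<Longrightarrow> (deriv ^^ i) f z = 0" "\<And>j. j < q \<Longrightarrow> (deriv ^^ j) g z = 0"
  shows "(deriv ^^ (p + q)) (\<lambda>w. f w * g w) z
           = of_nat ((p + q) choose p) * (deriv ^^ p) f z * (deriv ^^ q) g z"
proof -
  let ?t = "\<lambda>i. of_nat ((p + q) choose i) * (deriv ^^ i) f z * (deriv ^^ (p + q - i)) g z"
  have "(deriv ^^ (p + q)) (\<lambda>w. f w * g w) z = (\<Sum>i = 0..p + q. ?t i)"
    by (rule higher_deriv_mult[OF assms(1-4)])
  also have "\<dots> = ?t p + (\<Sum>i \<in> {0..p + q} - {p}. ?t i)"
    by (rule sum.remove) auto
  also have "(\<Sum>i \<in> {0..p + q} - {p}. ?t i) = 0"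
  proof (intro sum.neutral ballI)
    fix i assume "i \<in> {0..p + q} - {p}"
    then have "i < p \<or> p + q - i < q" by auto
    then show "?t i = 0" using assms(5,6) by auto
  qed
  finally show ?thesis by simp
qed

lemma higher_deriv_power_of_zero:
  fixes s :: "complex \<Rightarrow> complex"
  assumes "s holomorphic_on S" "open S" "z \<in> S" "s z = 0"
  shows "(\<forall>j<k. (deriv ^^ j) (\<lambda>w. s w ^ k) z = 0)
           \<and> (deriv ^^ k) (\<lambda>w. s w ^ k) z = fact k * deriv s z ^ k"
proof (induct k)
  case 0
  then show ?case by simp
next
  case (Suc k)
  have holo: "(\<lambda>w. s w ^ k) holomorphic_on S"
    using assms(1) by (auto intro!: holomorphic_intros)
  have s0: "\<And>i. i < 1 \<Longrightarrow> (deriv ^^ i) s z = 0"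
    using assms(4) by simp
  have IH: "\<And>j. j < k \<Longrightarrow> (deriv ^^ j) (\<lambda>w. s w ^ k) z = 0"
    using Suc by blast
  have "(\<lambda>w. s w ^ Suc k) = (\<lambda>w. s w * s w ^ k)"
    by simp
  then show ?case
    using higher_deriv_mult_below_order[where p = 1 and q = k, OF assms(1) holo assms(2,3) s0 IH]
      higher_deriv_mult_at_order[where p = 1 and q = k, OF assms(1) holo assms(2,3) s0 IH] Suc
    by (simp add: algebra_simps)
qed

lemma holomorphic_on_poly_comp: "g holomorphic_on S \<Longrightarrow> (\<lambda>w. poly p (g w)) holomorphic_on S"
  by (induct p) (auto intro!: holomorphic_intros)

lemma poly2_holomorphic:
  assumes "f holomorphic_on S" "g holomorphic_on S"
  shows "(\<lambda>w. poly2 H (f w) (g w)) holomorphic_on S"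
  by (induct H) (use assms in \<open>auto simp: poly2_pCons intro!: holomorphic_intros holomorphic_on_poly_comp\<close>)

lemma polar_rot_poly:
  assumes "f \<in> R2"
  shows "f (r * cos w) (r * sin w) = poly2 (rot_poly a f) (r * cos (w - a)) (r * sin (w - a))"
proof -
  have w: "w = a + (w - a)"
    by simp
  have "f (r * cos w) (r * sin w) = f (cos a * (r * cos (w - a)) - sin a * (r * sin (w - a)))
                                      (sin a * (r * cos (w - a)) + cos a * (r * sin (w - a)))"
    by (subst (1 2) w, simp only: cos_add sin_add) (simp add: algebra_simps)
  then show ?thesis
    by (simp add: poly2_rot_poly[OF assms])
qed

text \<open>In polar coordinates \<open>f = Q(\<rho> cos(\<phi> - a), \<rho> sin(\<phi> - a))\<close> with \<open>Q = rot_poly a f\<close>,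
  and \<open>\<rho> sin(\<phi> - a)\<close> has a simple zero at \<open>\<phi> = a\<close>; so if \<open>Q\<close> vanishes to order \<open>k\<close>
  in \<open>v\<close>, so does \<open>f\<close> in \<open>\<phi>\<close>, with \<open>k\<close>-th derivative \<open>k! \<rho>\<^sup>k Q\<^sub>k(\<rho>)\<close>.\<close>
lemma phi_deriv_rot_poly:
  assumes "f \<in> R2" "\<forall>i<k. coeff (rot_poly a f) i = 0"
  shows "\<forall>j<k. phi_deriv f j a r = 0"
    and "phi_deriv f k a r = fact k * r ^ k * poly (coeff (rot_poly a f) k) r"
proof -
  obtain H where H: "rot_poly a f = monom 1 k * H"
    using assms(2) by (auto simp: dvd_def simp flip: monom_1_dvd_iff')
  define s where "s = (\<lambda>w. r * sin (w - a))"
  define b where "b = (\<lambda>w. poly2 H (r * cos (w - a)) (r * sin (w - a)))"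
  have polar: "(\<lambda>w. f (r * cos w) (r * sin w)) = (\<lambda>w. s w ^ k * b w)"
    by (simp add: fun_eq_iff polar_rot_poly[OF assms(1), of r _ a] H s_def b_def)
  have hs: "s holomorphic_on UNIV"
    unfolding s_def by (auto intro!: holomorphic_intros)
  have hsk: "(\<lambda>w. s w ^ k) holomorphic_on UNIV"
    using hs by (auto intro!: holomorphic_intros)
  have hb: "b holomorphic_on UNIV"
    unfolding b_def by (rule poly2_holomorphic) (auto intro!: holomorphic_intros)
  have "(s has_field_derivative r) (at a)"
    unfolding s_def by (auto intro!: derivative_eq_intros)
  then have ds: "deriv s a = r"
    by (rule DERIV_imp_deriv)
  have sk: "\<And>j. j < k \<Longrightarrow> (deriv ^^ j) (\<lambda>w. s w ^ k) a = 0"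
    "(deriv ^^ k) (\<lambda>w. s w ^ k) a = fact k * r ^ k"
    using higher_deriv_power_of_zero[OF hs open_UNIV UNIV_I, of a k] by (simp_all add: s_def ds[unfolded s_def])
  have b0: "\<And>j. j < 0 \<Longrightarrow> (deriv ^^ j) b a = 0"
    by simp
  show "\<forall>j<k. phi_deriv f j a r = 0"
    unfolding phi_deriv_def polar using higher_deriv_mult_below_order[where p = k and q = 0, OF hsk hb _ _ sk(1) b0] by simp
  have "b a = poly (coeff (rot_poly a f) k) r"
    by (simp add: b_def H poly2_at_0 coeff_monom_mult)
  then show "phi_deriv f k a r = fact k * r ^ k * poly (coeff (rot_poly a f) k) r"
    unfolding phi_deriv_def polar using higher_deriv_mult_at_order[where p = k and q = 0, OF hsk hb _ _ sk(1) b0] sk(2) by simp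
qed

lemma phi_deriv_even_vanishing_iff:
  assumes "f \<in> R2" "even_below (2 * m) (rot_poly a f)" "\<nu> \<le> m"
  shows "(\<forall>j<\<nu>. \<forall>r. phi_deriv f (2 * j) a r = 0) \<longleftrightarrow> (\<forall>i<2 * \<nu>. coeff (rot_poly a f) i = 0)"
proof
  assume "\<forall>i<2 * \<nu>. coeff (rot_poly a f) i = 0"
  then show "\<forall>j<\<nu>. \<forall>r. phi_deriv f (2 * j) a r = 0"
    using phi_deriv_rot_poly(1)[OF assms(1)] by auto
next
  assume even_derivs: "\<forall>j<\<nu>. \<forall>r. phi_deriv f (2 * j) a r = 0"
  have "\<forall>i<k. coeff (rot_poly a f) i = 0" if "k \<le> 2 * \<nu>" for k
    using that
  proof (induct k)
    case (Suc k)
    then have below: "\<forall>i<k. coeff (rot_poly a f) i = 0"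
      by simp
    have "coeff (rot_poly a f) k = 0"
    proof (cases "odd k")
      case True
      then show ?thesis using assms(2,3) Suc(2) by (simp add: even_below_def)
    next
      case False
      then obtain j where "k = 2 * j" "j < \<nu>"
        using Suc(2) by (auto elim!: evenE)
      then have "poly (smult (fact k) (monom 1 k * coeff (rot_poly a f) k)) r = 0" for r
        using even_derivs phi_deriv_rot_poly(2)[OF assms(1) below, of r] by (simp add: poly_monom)
      then have "smult (fact k) (monom 1 k * coeff (rot_poly a f) k) = 0"
        using poly_all_0_iff_0 by blast
      then show ?thesis
        by (simp add: monom_eq_0_iff)
    qed
    with below show ?case
      by (simp add: less_Suc_eq)
  qed simp
  then show "\<forall>i<2 * \<nu>. coeff (rot_poly a f) i = 0"
    by blast
qed

section \<open>Homomorphisms and the conductor\<close>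

lemma HomC_memD:
  assumes "\<phi> \<in> HomC C A"
  shows HomC_into: "\<And>a. a \<in> A \<Longrightarrow> \<phi> a \<in> C"
    and HomC_linear: "\<And>c a. c \<in> C \<Longrightarrow> a \<in> A \<Longrightarrow> \<phi> (\<lambda>x y. c x y * a x y) = (\<lambda>x y. c x y * \<phi> a x y)"
    and HomC_outside: "\<And>a. a \<notin> A \<Longrightarrow> \<phi> a = (\<lambda>x y. 0)"
  using assms unfolding HomC_def by auto

lemma HomC_apply:
  assumes "\<phi> \<in> HomC C A" "a \<in> A" "C \<subseteq> A" "A \<subseteq> R2" "(\<lambda>x y. 1) \<in> A"
    and \<delta>: "\<And>a. a \<in> A \<Longrightarrow> (\<lambda>x y. \<delta> x y * a x y) \<in> C" "\<delta> u v \<noteq> 0"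
  shows "\<phi> a = (\<lambda>x y. a x y * \<phi> (\<lambda>x y. 1) x y)"
proof -
  let ?one = "\<lambda>x y. 1 :: complex"
  note linear = HomC_linear[OF assms(1)] and into_C = HomC_into[OF assms(1)]
  have \<delta>C: "\<delta> \<in> C"
    using \<delta>(1)[OF assms(5)] by simp
  have "(\<lambda>x y. \<delta> x y * \<phi> a x y) = \<phi> (\<lambda>x y. \<delta> x y * a x y * ?one x y)"
    using linear[OF \<delta>C assms(2)] by simp
  also have "\<dots> = (\<lambda>x y. \<delta> x y * a x y * \<phi> ?one x y)"
    using linear[OF \<delta>(1)[OF assms(2)] assms(5)] .
  finally have "\<delta> x y * (\<phi> a x y - a x y * \<phi> ?one x y) = 0" for x y
    by (simp add: fun_eq_iff right_diff_distrib mult.assoc)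
  moreover have "\<delta> \<in> R2" "(\<lambda>x y. \<phi> a x y - a x y * \<phi> ?one x y) \<in> R2"
    using \<delta>C into_C assms(2-5) by (auto intro!: R2_diff R2_mult)
  ultimately have "(\<lambda>x y. \<phi> a x y - a x y * \<phi> ?one x y) = (\<lambda>x y. 0)"
    using R2_zero_divisor \<delta>(2) by blast
  then show ?thesis
    by (simp add: fun_eq_iff)
qed

lemma HomC_bij_conductor:
  assumes "C \<subseteq> A" "A \<subseteq> R2" "(\<lambda>x y. 1) \<in> A"
    and add: "\<And>a b. a \<in> A \<Longrightarrow> b \<in> A \<Longrightarrow> (\<lambda>x y. a x y + b x y) \<in> A"
    and mult: "\<And>a b. a \<in> A \<Longrightarrow> b \<in> A \<Longrightarrow> (\<lambda>x y. a x y * b x y) \<in> A"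
    and "\<And>a. a \<in> A \<Longrightarrow> (\<lambda>x y. \<delta> x y * a x y) \<in> C" "\<delta> u v \<noteq> 0"
  shows "bij_betw (\<lambda>\<phi>. \<phi> (\<lambda>x y. 1)) (HomC C A) {g \<in> C. \<forall>a\<in>A. (\<lambda>x y. a x y * g x y) \<in> C}"
proof (rule bij_betw_imageI)
  let ?one = "\<lambda>x y. 1 :: complex"
  note apply_one = HomC_apply[OF _ _ assms(1-3,6,7)]
  have "\<phi> = \<psi>" if \<phi>\<psi>: "\<phi> \<in> HomC C A" "\<psi> \<in> HomC C A" "\<phi> ?one = \<psi> ?one" for \<phi> \<psi>
  proof
    fix a
    show "\<phi> a = \<psi> a"
    proof (cases "a \<in> A")
      case True
      have "\<phi> a = (\<lambda>x y. a x y * \<phi> ?one x y)"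
        by (rule apply_one[OF \<phi>\<psi>(1) True])
      also have "\<dots> = (\<lambda>x y. a x y * \<psi> ?one x y)"
        by (simp only: \<phi>\<psi>(3))
      also have "\<dots> = \<psi> a"
        by (rule apply_one[OF \<phi>\<psi>(2) True, symmetric])
      finally show ?thesis .
    next
      case False
      then show ?thesis
        using HomC_outside[OF \<phi>\<psi>(1) False] HomC_outside[OF \<phi>\<psi>(2) False] by simp
    qed
  qed
  then show "inj_on (\<lambda>\<phi>. \<phi> ?one) (HomC C A)"
    by (intro inj_onI)
  show "(\<lambda>\<phi>. \<phi> ?one) ` HomC C A = {g \<in> C. \<forall>a\<in>A. (\<lambda>x y. a x y * g x y) \<in> C}"
  proof (intro equalityI subsetI)
    fix g assume "g \<in> (\<lambda>\<phi>. \<phi> ?one) ` HomC C A"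
    then obtain \<phi> where \<phi>: "\<phi> \<in> HomC C A" and g: "g = \<phi> ?one"
      by blast
    note into_C = HomC_into[OF \<phi>]
    have "(\<lambda>x y. a x y * g x y) \<in> C" if "a \<in> A" for a
    proof -
      have "\<phi> a = (\<lambda>x y. a x y * g x y)"
        unfolding g by (rule apply_one[OF \<phi> that])
      then show ?thesis
        using into_C[OF that] by simp
    qed
    then show "g \<in> {g \<in> C. \<forall>a\<in>A. (\<lambda>x y. a x y * g x y) \<in> C}"
      using into_C[OF assms(3)] g by simp
  next
    fix g assume g: "g \<in> {g \<in> C. \<forall>a\<in>A. (\<lambda>x y. a x y * g x y) \<in> C}"
    define \<psi> where "\<psi> a = (if a \<in> A then (\<lambda>x y. a x y * g x y) else (\<lambda>x y. 0))" for a :: bipoly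
    have "\<psi> \<in> HomC C A"
      unfolding HomC_def
    proof (intro CollectI conjI ballI allI impI)
      fix a b assume "a \<in> A" "b \<in> A"
      then show "\<psi> (\<lambda>x y. a x y + b x y) = (\<lambda>x y. \<psi> a x y + \<psi> b x y)"
        using add by (simp add: \<psi>_def distrib_right)
    next
      fix c a assume "c \<in> C" "a \<in> A"
      then show "\<psi> (\<lambda>x y. c x y * a x y) = (\<lambda>x y. c x y * \<psi> a x y)"
        using mult assms(1) by (auto simp: \<psi>_def mult.assoc)
    qed (use g in \<open>simp_all add: \<psi>_def\<close>)
    moreover have "\<psi> ?one = g"
      using assms(3) by (simp add: \<psi>_def)
    ultimately show "g \<in> (\<lambda>\<phi>. \<phi> ?one) ` HomC C A"
      by (metis imageI)
  qed
qed

lemma conductor_if_vanishing: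
  assumes "\<forall>a\<in>P. \<mu> a \<le> m" "g \<in> algA P (\<lambda>_. m)"
    and "\<forall>a\<in>P. \<forall>i<2 * (m - \<mu> a). coeff (rot_poly a g) i = 0" "f \<in> algA P \<mu>"
  shows "(\<lambda>x y. f x y * g x y) \<in> algA P (\<lambda>_. m)"
proof -
  have "even_below (2 * (\<mu> a + (m - \<mu> a))) (rot_poly a f * rot_poly a g)" if "a \<in> P" for a
    using assms that by (intro even_below_mult_vanishing) (auto simp: algA_eq)
  then show ?thesis
    using assms by (auto simp: algA_eq R2_mult rot_poly_mult)
qed

text \<open>Multiplying by the test element \<open>lform_prod P e\<close> below shifts the lowest term of \<open>g\<close>
  at \<open>\<alpha>\<close> by the odd amount \<open>2 \<mu>_\<alpha> + 1\<close>, which \<open>A(P, m)\<close> forbids below order \<open>2 m\<close>.\<close>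
lemma vanishing_if_conductor:
  assumes "finite P" "\<forall>a\<in>P. \<forall>b\<in>P. a \<noteq> b \<longrightarrow> sin (a - b) \<noteq> 0" "\<forall>a\<in>P. \<mu> a \<le> m"
    and g: "g \<in> algA P (\<lambda>_. m)" "\<forall>f\<in>algA P \<mu>. (\<lambda>x y. f x y * g x y) \<in> algA P (\<lambda>_. m)"
    and "\<alpha> \<in> P"
  shows "\<forall>i<2 * (m - \<mu> \<alpha>). coeff (rot_poly \<alpha> g) i = 0"
proof (rule ccontr)
  assume "\<not> ?thesis"
  then obtain i where i: "i < 2 * (m - \<mu> \<alpha>)" "coeff (rot_poly \<alpha> g) i \<noteq> 0"
    and lower: "\<forall>j<i. coeff (rot_poly \<alpha> g) j = 0"
    using exists_least_iff[of "\<lambda>i. i < 2 * (m - \<mu> \<alpha>) \<and> coeff (rot_poly \<alpha> g) i \<noteq> 0"]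
    by (metis less_trans)
  have gR: "g \<in> R2" and g_even: "even_below (2 * m) (rot_poly \<alpha> g)"
    using g(1) \<open>\<alpha> \<in> P\<close> by (auto simp: algA_eq)
  have "i < 2 * m"
    using i(1) by linarith
  then have "even i"
    using g_even i(2) by (auto simp: even_below_def)
  define e where "e c = (if c = \<alpha> then 2 * \<mu> \<alpha> + 1 else 2 * \<mu> c)" for c
  have fA: "lform_prod P e \<in> algA P \<mu>" and fR: "lform_prod P e \<in> R2"
    using lform_prod_mult_in_algA[OF assms(1) R2_const, of \<mu> e 1] assms(1)
    by (auto simp: e_def lform_prod_in_R2)
  have "coeff (rot_poly \<alpha> (\<lambda>x y. lform_prod P e x y * g x y)) (e \<alpha> + i)
          = coeff (rot_poly \<alpha> (lform_prod P e)) (e \<alpha>) * coeff (rot_poly \<alpha> g) i"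
    using rot_poly_lform_prod_mult_vanishing[OF assms(1) \<open>\<alpha> \<in> P\<close> R2_const, of _ e 1] lower
    by (simp add: rot_poly_mult[OF fR gR] coeff_mult_lowest)
  also have "\<dots> \<noteq> 0"
    using coeff_rot_poly_lform_prod[OF assms(1) \<open>\<alpha> \<in> P\<close>] assms(2) \<open>\<alpha> \<in> P\<close> i(2) by auto
  finally have "coeff (rot_poly \<alpha> (\<lambda>x y. lform_prod P e x y * g x y)) (e \<alpha> + i) \<noteq> 0" .
  moreover have "odd (e \<alpha> + i)" "e \<alpha> + i < 2 * m"
    using \<open>even i\<close> i(1) assms(3) \<open>\<alpha> \<in> P\<close> by (auto simp: e_def)
  ultimately show False
    using g(2) fA \<open>\<alpha> \<in> P\<close> by (auto simp: algA_eq even_below_def)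
qed

lemma conductor_eq_phi_deriv_vanishing:
  assumes "finite P" "\<forall>a\<in>P. \<forall>b\<in>P. a \<noteq> b \<longrightarrow> sin (a - b) \<noteq> 0" "\<forall>a\<in>P. \<mu> a \<le> m"
  shows "{g \<in> algA P (\<lambda>_. m). \<forall>f\<in>algA P \<mu>. (\<lambda>x y. f x y * g x y) \<in> algA P (\<lambda>_. m)}
       = {g \<in> algA P (\<lambda>_. m). \<forall>\<alpha>\<in>P. \<forall>j < m - \<mu> \<alpha>. \<forall>\<rho>. phi_deriv g (2 * j) \<alpha> \<rho> = 0}"
proof -
  have "(\<forall>j < m - \<mu> \<alpha>. \<forall>\<rho>. phi_deriv g (2 * j) \<alpha> \<rho> = 0)
          \<longleftrightarrow> (\<forall>i < 2 * (m - \<mu> \<alpha>). coeff (rot_poly \<alpha> g) i = 0)"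
    if "g \<in> algA P (\<lambda>_. m)" "\<alpha> \<in> P" for g \<alpha>
    using that by (intro phi_deriv_even_vanishing_iff) (auto simp: algA_eq)
  then show ?thesis
    using conductor_if_vanishing[OF assms(3)] vanishing_if_conductor[OF assms]
    by (intro Collect_cong conj_cong refl) meson
qed

lemma Lambda_finite: "finite (Lambda n)"
  unfolding Lambda_def by simp

lemma Lambda_sin_diff_nonzero:
  assumes "a \<in> Lambda n" "b \<in> Lambda n" "a \<noteq> b"
  shows "sin (a - b) \<noteq> 0"
proof
  assume sin0: "sin (a - b) = 0"
  obtain k l where kl: "k < n" "l < n"
    and ab: "a = of_real (real k * pi / real n)" "b = of_real (real l * pi / real n)"
    using assms(1,2) unfolding Lambda_def by auto
  have "k \<noteq> l"
    using assms(3) ab by auto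
  have "a - b = of_real ((real k - real l) * pi / real n)"
    by (simp add: ab diff_divide_distrib left_diff_distrib)
  then have "sin ((real k - real l) * pi / real n) = 0"
    using sin0 by (metis of_real_eq_0_iff sin_of_real)
  then obtain j :: int where "(real k - real l) * pi / real n = of_int j * pi"
    using sin_zero_iff_int2 by blast
  then have "real k - real l = of_int j * real n"
    using kl by (simp add: nonzero_divide_eq_eq)
  then have j: "int k - int l = j * int n"
    by (metis of_int_eq_iff of_int_diff of_int_mult of_int_of_nat_eq)
  have "\<bar>j\<bar> * int n = \<bar>int k - int l\<bar>"
    by (simp add: j abs_mult)
  also have "\<dots> < 1 * int n"
    using kl by linarith
  finally have "j = 0"
    by (simp only: mult_less_cancel_right) simp
  then show False
    using j \<open>k \<noteq> l\<close> by simp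
qed

theorem theorem3p10:
  fixes n :: nat and \<mu> :: "complex \<Rightarrow> nat"
  assumes "n \<ge> 1"
  defines "m \<equiv> Max (\<mu> ` Lambda n)"
  defines "\<nu> \<equiv> (\<lambda>\<alpha>. m - \<mu> \<alpha>)"
  defines "A \<equiv> algA (Lambda n) \<mu>"
  defines "C \<equiv> algA (Lambda n) (\<lambda>_. m)"
  defines "\<Omega> \<equiv> HomC C A"
  defines "S \<equiv> {f \<in> C. \<forall>\<alpha>\<in>Lambda n. \<forall>j < \<nu> \<alpha>. \<forall>\<rho>. phi_deriv f (2 * j) \<alpha> \<rho> = 0}"
  shows "\<exists>\<Phi>. bij_betw \<Phi> \<Omega> S
     \<and> (\<forall>\<phi>\<in>\<Omega>. \<forall>\<psi>\<in>\<Omega>. \<Phi> (\<lambda>a z1 z2. \<phi> a z1 z2 + \<psi> a z1 z2)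
                          = (\<lambda>z1 z2. \<Phi> \<phi> z1 z2 + \<Phi> \<psi> z1 z2))
     \<and> (\<forall>c\<in>C. \<forall>\<phi>\<in>\<Omega>. \<Phi> (\<lambda>a z1 z2. c z1 z2 * \<phi> a z1 z2)
                          = (\<lambda>z1 z2. c z1 z2 * \<Phi> \<phi> z1 z2))"
proof -
  have fin: "finite (Lambda n)"
    by (rule Lambda_finite)
  have sin: "\<forall>a\<in>Lambda n. \<forall>b\<in>Lambda n. a \<noteq> b \<longrightarrow> sin (a - b) \<noteq> 0"
    using Lambda_sin_diff_nonzero by blast
  have \<mu>_le: "\<forall>a\<in>Lambda n. \<mu> a \<le> m"
    using fin by (simp add: m_def)
  define \<delta> where "\<delta> = lform_prod (Lambda n) (\<lambda>_. 2 * m)"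
  have "bij_betw (\<lambda>\<phi>. \<phi> (\<lambda>x y. 1)) \<Omega> {g \<in> C. \<forall>a\<in>A. (\<lambda>x y. a x y * g x y) \<in> C}"
    unfolding \<Omega>_def
  proof (rule HomC_bij_conductor[where \<delta> = \<delta> and u = 1 and v = \<i>])
    show "C \<subseteq> A"
      unfolding A_def C_def using \<mu>_le by (intro algA_antimono) simp
    show "(\<lambda>x y. \<delta> x y * a x y) \<in> C" if "a \<in> A" for a
      using that algA_subset_R2 unfolding \<delta>_def A_def C_def
      by (intro lform_prod_mult_in_algA[OF fin]) auto
    show "\<delta> 1 \<i> \<noteq> 0"
      unfolding \<delta>_def by (rule lform_prod_nonzero[OF fin])
  qed (auto simp: A_def algA_subset_R2 algA_const algA_add algA_mult)
  moreover have "{g \<in> C. \<forall>a\<in>A. (\<lambda>x y. a x y * g x y) \<in> C} = S"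
    unfolding A_def C_def S_def \<nu>_def by (rule conductor_eq_phi_deriv_vanishing[OF fin sin \<mu>_le])
  ultimately show ?thesis
    by auto
qed

end
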